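(* Let $s>0$ and $0<\epsilon<\min\{s,1\}$, and let $\rho,\lambda\in(1,\infty)$, $\sigma\in(1/2,1)$ be chosen such that $1-\sigma=\frac{1}{\rho}+\frac{1}{\lambda}$, $\rho(2\sigma-1-\epsilon)>1$ and $\lambda\le 2/(1-s)^+$. Define the norm $\|u\|_{\mathcal{H}^s}:=\|u\|_{H^s}+\|\hat{u}\|_{L^\lambda(-1,1)}$. For the Korteweg–de Vries equation $u_t+u_{xxx}\pm(u^2)_x=0$ on $\mathbb{R}$, with phase $\Phi(\xi,\xi_1,\xi_2)=3\xi\xi_1\xi_2$ and symbol $m=\xi$, consider the bilinear operator $$\mathcal{F}[T^{\alpha,M}(u_1,u_2)](\xi)=\int_{\substack{\xi_1+\xi_2=\xi\\|\Phi-\alpha|<M}}\xi\,\hat{u}_1(\xi_1)\hat{u}_2(\xi_2)\,d\xi_1,\qquad \alpha,M\in\mathbb{R}.$$ Then for any $u_1,u_2\in\mathcal{H}^s$, $$\|T^{\alpha,M}(u_1,u_2)\|_{\mathcal{H}^s}\lesssim \langle M\rangle^{1/2}\|u_1\|_{\mathcal{H}^s}\|u_2\|_{\mathcal{H}^s},$$ where $\langle M\rangle=(1+M^2)^{1/2}$.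
   Context: This is used to prove nonlinear smoothing for KdV on $H^s(\mathbb{R})\cap L^2(|x|^{s/2}dx)$ of any order $\epsilon<\min\{s,1\}$, $s>0$. The auxiliary norm $\mathcal{H}^s$ (with the $L^\lambda(-1,1)$ control of the Fourier transform at low frequencies) is introduced because the plain $H^s$ norm is not enough for the phase-weighted bound; for data in $H^s\cap L^2(|x|^{s/2}dx)$ the profile's Fourier transform lies in $H^{s/2}\hookrightarrow L^\lambda$. *)

theory Defs
  imports "HOL-Analysis.Analysis"
begin

text \<open>All objects are represented on the Fourier side: a function u is
  represented by its Fourier transform f = u-hat :: real \<Rightarrow> complex.\<close>

definition Hs_sq :: "real \<Rightarrow> (real \<Rightarrow> complex) \<Rightarrow> ennreal" where
  "Hs_sq s f = (\<integral>\<^sup>+ \<xi>. ennreal ((1 + \<xi>\<^sup>2) powr s * (cmod (f \<xi>))\<^sup>2) \<partial>lborel)"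

definition Llam_pow :: "real \<Rightarrow> (real \<Rightarrow> complex) \<Rightarrow> ennreal" where
  "Llam_pow lam f = (\<integral>\<^sup>+ \<xi>\<in>{-1<..<1}. ennreal (cmod (f \<xi>) powr lam) \<partial>lborel)"

definition in_calH :: "real \<Rightarrow> real \<Rightarrow> (real \<Rightarrow> complex) \<Rightarrow> bool" where
  "in_calH s lam f \<longleftrightarrow> f \<in> borel_measurable lborel \<and> Hs_sq s f < \<infinity> \<and> Llam_pow lam f < \<infinity>"

definition calH_norm :: "real \<Rightarrow> real \<Rightarrow> (real \<Rightarrow> complex) \<Rightarrow> real" where
  "calH_norm s lam f = sqrt (enn2real (Hs_sq s f)) + (enn2real (Llam_pow lam f)) powr (1 / lam)"

definition T_KdV :: "real \<Rightarrow> real \<Rightarrow> (real \<Rightarrow> complex) \<Rightarrow> (real \<Rightarrow> complex) \<Rightarrow> real \<Rightarrow> complex" where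
  "T_KdV \<alpha> M f1 f2 \<xi> =
     (\<integral> \<xi>1. indicator {\<eta>. \<bar>3 * \<xi> * \<eta> * (\<xi> - \<eta>) - \<alpha>\<bar> < M} \<xi>1 *\<^sub>R
              (complex_of_real \<xi> * f1 \<xi>1 * f2 (\<xi> - \<xi>1)) \<partial>lborel)"

end

theory Submission
  imports Defs
begin

text \<open>Write F_j(\<xi>) = \<langle>\<xi>\<rangle>^s |f_j(\<xi>)|. Then
  \<langle>\<xi>\<rangle>^s |T(\<xi>)| \<le> \<integral> K(\<xi>,\<eta>) 1{|\<Phi> - \<alpha>| < M} F_1(\<eta>) F_2(\<xi> - \<eta>) d\<eta>,
  where K(\<xi>,\<eta>) = \<langle>\<xi>\<rangle>^s |\<xi>| / (\<langle>\<eta>\<rangle>^s \<langle>\<xi> - \<eta>\<rangle>^s) \<le> 2^(s/2) |\<xi>| by Peetre's inequality.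
  Split the integral at |\<xi> - 2\<eta>| = |\<xi>|/2. Away from the midpoint \<partial>\<Phi>/\<partial>\<eta> = 3\<xi>(\<xi> - 2\<eta>)
  has size at least 3\<xi>^2/2, so the window |\<Phi> - \<alpha>| < M has \<eta>-measure O(M/\<xi>^2) and
  \<integral> K^2 d\<eta> = O(M) uniformly in \<xi>. Near the midpoint |\<xi>| \<le> 4|\<eta>| and
  \<partial>\<Phi>/\<partial>\<xi> = 3\<eta>(2\<xi> - \<eta>) has size at least 3\<eta>^2, so \<integral> K^2 d\<xi> = O(M) uniformly in \<eta>.
  Either bound, with Cauchy-Schwarz and Tonelli, controls the H^s norm of the corresponding
  piece by M^(1/2) \<parallel>f_1\<parallel>_(H^s) \<parallel>f_2\<parallel>_(H^s). The L^\<lambda>(-1,1) part is bounded pointwise: for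
  |\<xi>| \<le> 1 we have K \<le> 2^(s/2), hence |T(\<xi>)| \<le> 2^(s/2) \<parallel>f_1\<parallel>_(H^s) \<parallel>f_2\<parallel>_(H^s).\<close>

lemma norm_integral_le_nn_integral:
  "ennreal (norm (integral\<^sup>L M f)) \<le> (\<integral>\<^sup>+x. ennreal (norm (f x)) \<partial>M)"
  by (cases "integrable M f") (simp_all add: integral_norm_bound_ennreal not_integrable_integral_eq)

lemma nn_integral_lborel_translate:
  fixes f :: "real \<Rightarrow> ennreal"
  assumes "f \<in> borel_measurable borel"
  shows "(\<integral>\<^sup>+x. f (x - t) \<partial>lborel) = (\<integral>\<^sup>+x. f x \<partial>lborel)"
  using nn_integral_real_affine[OF assms, of 1 "- t"] by simp

lemma nn_integral_lborel_reflect: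
  fixes f :: "real \<Rightarrow> ennreal"
  assumes "f \<in> borel_measurable borel"
  shows "(\<integral>\<^sup>+x. f (t - x) \<partial>lborel) = (\<integral>\<^sup>+x. f x \<partial>lborel)"
  using nn_integral_real_affine[OF assms, of "- 1" t] by simp

lemma nn_integral_convolution_sq_le:
  fixes F G :: "real \<Rightarrow> ennreal"
  assumes [measurable]: "F \<in> borel_measurable borel" "G \<in> borel_measurable borel"
  shows "(\<integral>\<^sup>+\<eta>. F \<eta> * G (\<xi> - \<eta>) \<partial>lborel)\<^sup>2
           \<le> (\<integral>\<^sup>+x. (F x)\<^sup>2 \<partial>lborel) * (\<integral>\<^sup>+x. (G x)\<^sup>2 \<partial>lborel)"
  using Cauchy_Schwarz_nn_integral[of F lborel "\<lambda>\<eta>. G (\<xi> - \<eta>)"]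
  by (simp add: nn_integral_lborel_reflect[of "\<lambda>x. (G x)\<^sup>2"])

lemma nn_integral_bilinear_sq_le_row:
  fixes k :: "real \<Rightarrow> real \<Rightarrow> ennreal" and F G :: "real \<Rightarrow> ennreal"
  assumes [measurable]: "case_prod k \<in> borel_measurable (lborel \<Otimes>\<^sub>M lborel)"
    "F \<in> borel_measurable borel" "G \<in> borel_measurable borel"
    and row: "\<And>\<xi>. (\<integral>\<^sup>+\<eta>. (k \<xi> \<eta>)\<^sup>2 \<partial>lborel) \<le> A"
  shows "(\<integral>\<^sup>+\<xi>. (\<integral>\<^sup>+\<eta>. k \<xi> \<eta> * F \<eta> * G (\<xi> - \<eta>) \<partial>lborel)\<^sup>2 \<partial>lborel)
           \<le> A * (\<integral>\<^sup>+x. (F x)\<^sup>2 \<partial>lborel) * (\<integral>\<^sup>+x. (G x)\<^sup>2 \<partial>lborel)"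
proof -
  let ?H = "\<lambda>\<xi> \<eta>. (F \<eta>)\<^sup>2 * (G (\<xi> - \<eta>))\<^sup>2"
  have "(\<integral>\<^sup>+\<eta>. k \<xi> \<eta> * F \<eta> * G (\<xi> - \<eta>) \<partial>lborel)\<^sup>2
      \<le> (\<integral>\<^sup>+\<eta>. (k \<xi> \<eta>)\<^sup>2 \<partial>lborel) * (\<integral>\<^sup>+\<eta>. ?H \<xi> \<eta> \<partial>lborel)" for \<xi>
    using Cauchy_Schwarz_nn_integral[of "k \<xi>" lborel "\<lambda>\<eta>. F \<eta> * G (\<xi> - \<eta>)"]
    by (simp add: mult.assoc power_mult_distrib)
  also have "\<dots> \<xi> \<le> A * (\<integral>\<^sup>+\<eta>. ?H \<xi> \<eta> \<partial>lborel)" for \<xi>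
    by (intro mult_right_mono row) simp
  finally have "(\<integral>\<^sup>+\<xi>. (\<integral>\<^sup>+\<eta>. k \<xi> \<eta> * F \<eta> * G (\<xi> - \<eta>) \<partial>lborel)\<^sup>2 \<partial>lborel)
      \<le> (\<integral>\<^sup>+\<xi>. A * (\<integral>\<^sup>+\<eta>. ?H \<xi> \<eta> \<partial>lborel) \<partial>lborel)"
    by (intro nn_integral_mono)
  also have "\<dots> = A * (\<integral>\<^sup>+\<eta>. (\<integral>\<^sup>+\<xi>. ?H \<xi> \<eta> \<partial>lborel) \<partial>lborel)"
    by (simp add: nn_integral_cmult lborel_pair.Fubini'[of "\<lambda>\<eta> \<xi>. ?H \<xi> \<eta>"])
  also have "(\<lambda>\<eta>. \<integral>\<^sup>+\<xi>. ?H \<xi> \<eta> \<partial>lborel) = (\<lambda>\<eta>. (F \<eta>)\<^sup>2 * (\<integral>\<^sup>+x. (G x)\<^sup>2 \<partial>lborel))"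
    by (simp add: nn_integral_cmult nn_integral_lborel_translate[of "\<lambda>x. (G x)\<^sup>2"])
  finally show ?thesis
    by (simp add: nn_integral_multc mult.assoc)
qed

lemma nn_integral_bilinear_sq_le_column:
  fixes k :: "real \<Rightarrow> real \<Rightarrow> ennreal" and F G :: "real \<Rightarrow> ennreal"
  assumes [measurable]: "case_prod k \<in> borel_measurable (lborel \<Otimes>\<^sub>M lborel)"
    "F \<in> borel_measurable borel" "G \<in> borel_measurable borel"
    and column: "\<And>\<eta>. (\<integral>\<^sup>+\<xi>. (k \<xi> \<eta>)\<^sup>2 \<partial>lborel) \<le> B"
  shows "(\<integral>\<^sup>+\<xi>. (\<integral>\<^sup>+\<eta>. k \<xi> \<eta> * F \<eta> * G (\<xi> - \<eta>) \<partial>lborel)\<^sup>2 \<partial>lborel)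
           \<le> B * (\<integral>\<^sup>+x. (F x)\<^sup>2 \<partial>lborel) * (\<integral>\<^sup>+x. (G x)\<^sup>2 \<partial>lborel)"
proof -
  let ?H = "\<lambda>\<xi> \<eta>. (k \<xi> \<eta>)\<^sup>2 * (F \<eta>)\<^sup>2"
  have "(\<integral>\<^sup>+\<xi>. (\<integral>\<^sup>+\<eta>. k \<xi> \<eta> * F \<eta> * G (\<xi> - \<eta>) \<partial>lborel)\<^sup>2 \<partial>lborel)
      \<le> (\<integral>\<^sup>+\<xi>. (\<integral>\<^sup>+\<eta>. ?H \<xi> \<eta> \<partial>lborel) * (\<integral>\<^sup>+x. (G x)\<^sup>2 \<partial>lborel) \<partial>lborel)"
    using nn_integral_convolution_sq_le[of "\<lambda>\<eta>. k _ \<eta> * F \<eta>" G]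
    by (intro nn_integral_mono) (simp add: power_mult_distrib)
  also have "\<dots> = (\<integral>\<^sup>+\<eta>. (\<integral>\<^sup>+\<xi>. ?H \<xi> \<eta> \<partial>lborel) \<partial>lborel) * (\<integral>\<^sup>+x. (G x)\<^sup>2 \<partial>lborel)"
    by (simp add: nn_integral_multc lborel_pair.Fubini'[of "\<lambda>\<eta> \<xi>. ?H \<xi> \<eta>"])
  also have "(\<integral>\<^sup>+\<eta>. (\<integral>\<^sup>+\<xi>. ?H \<xi> \<eta> \<partial>lborel) \<partial>lborel) \<le> (\<integral>\<^sup>+\<eta>. B * (F \<eta>)\<^sup>2 \<partial>lborel)"
    by (intro nn_integral_mono) (simp add: nn_integral_multc column mult_right_mono)
  finally show ?thesis
    by (simp add: nn_integral_cmult mult_right_mono)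
qed

lemma ennreal_sq_add_le: "((a::ennreal) + b)\<^sup>2 \<le> 2 * a\<^sup>2 + 2 * b\<^sup>2"
proof (cases a; cases b)
  fix x y :: real assume ab: "a = ennreal x" "0 \<le> x" "b = ennreal y" "0 \<le> y"
  have "(x + y)\<^sup>2 \<le> 2 * x\<^sup>2 + 2 * y\<^sup>2"
    using sum_squares_ge_zero[of "x - y" 0] by (simp add: power2_eq_square algebra_simps)
  then have "ennreal ((x + y)\<^sup>2) \<le> ennreal (2 * x\<^sup>2) + ennreal (2 * y\<^sup>2)"
    by (simp flip: ennreal_plus)
  then show ?thesis
    using ab by (simp add: ennreal_power ennreal_mult' flip: ennreal_plus)
qed (auto simp: ennreal_mult_top)

lemma nn_integral_sq_add_le:
  fixes f g :: "'a \<Rightarrow> ennreal"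
  assumes [measurable]: "f \<in> borel_measurable M" "g \<in> borel_measurable M"
  shows "(\<integral>\<^sup>+x. (f x + g x)\<^sup>2 \<partial>M) \<le> 2 * (\<integral>\<^sup>+x. (f x)\<^sup>2 \<partial>M) + 2 * (\<integral>\<^sup>+x. (g x)\<^sup>2 \<partial>M)"
proof -
  have "(\<integral>\<^sup>+x. (f x + g x)\<^sup>2 \<partial>M) \<le> (\<integral>\<^sup>+x. 2 * (f x)\<^sup>2 + 2 * (g x)\<^sup>2 \<partial>M)"
    by (intro nn_integral_mono ennreal_sq_add_le)
  also have "\<dots> = 2 * (\<integral>\<^sup>+x. (f x)\<^sup>2 \<partial>M) + 2 * (\<integral>\<^sup>+x. (g x)\<^sup>2 \<partial>M)"
    by (simp add: nn_integral_add nn_integral_cmult)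
  finally show ?thesis .
qed

lemma ennreal_mult_of_bool_sq_le: "(ennreal x * of_bool P)\<^sup>2 \<le> ennreal (x\<^sup>2)"
  by (cases P; cases "x \<ge> 0") (simp_all add: ennreal_power ennreal_neg)

lemma expanding_sublevel_set_cover:
  fixes g :: "real \<Rightarrow> real" and S :: "real set"
  assumes "c > 0"
    and expanding: "\<And>x y. x \<in> S \<Longrightarrow> y \<in> S \<Longrightarrow> c * \<bar>x - y\<bar> \<le> \<bar>g x - g y\<bar>"
    and window: "\<And>x. x \<in> S \<Longrightarrow> \<bar>g x - a\<bar> < M"
  obtains I where "I \<in> sets lborel" "S \<subseteq> I" "emeasure lborel I \<le> ennreal (4 * max M 0 / c)"
proof -
  define d where "d = 2 * max M 0 / c"
  have diam: "\<bar>x - y\<bar> \<le> d" if "x \<in> S" "y \<in> S" for x y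
  proof -
    have "c * \<bar>x - y\<bar> \<le> 2 * max M 0"
      using expanding[OF that] window[OF that(1)] window[OF that(2)] by linarith
    with \<open>c > 0\<close> show ?thesis
      unfolding d_def by (simp add: pos_le_divide_eq mult.commute)
  qed
  show ?thesis
  proof (cases "S = {}")
    case True
    then show ?thesis by (intro that[of "{}"]) auto
  next
    case False
    then obtain x0 where "x0 \<in> S" by auto
    with diam have "S \<subseteq> {x0 - d .. x0 + d}" by force
    moreover have "emeasure lborel {x0 - d .. x0 + d} = ennreal (4 * max M 0 / c)"
      using \<open>c > 0\<close> by (simp add: d_def)
    ultimately show ?thesis by (intro that[of "{x0 - d .. x0 + d}"]) auto
  qed
qed

lemma nn_integral_le_cover:
  fixes g :: "'a \<Rightarrow> ennreal"
  assumes "I \<in> sets M" "\<And>x. x \<notin> I \<Longrightarrow> g x = 0" "\<And>x. g x \<le> c"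
  shows "(\<integral>\<^sup>+x. g x \<partial>M) \<le> c * emeasure M I"
proof -
  have "(\<integral>\<^sup>+x. g x \<partial>M) \<le> (\<integral>\<^sup>+x. c * indicator I x \<partial>M)"
    using assms(2,3) by (intro nn_integral_mono) (auto simp: indicator_def)
  then show ?thesis
    using assms(1) by (simp add: nn_integral_cmult_indicator)
qed

definition bracket_powr :: "real \<Rightarrow> real \<Rightarrow> real" where
  "bracket_powr s \<xi> = (1 + \<xi>\<^sup>2) powr (s / 2)"

definition kdv_kernel :: "real \<Rightarrow> real \<Rightarrow> real \<Rightarrow> real" where
  "kdv_kernel s \<xi> \<eta> = bracket_powr s \<xi> * \<bar>\<xi>\<bar> / (bracket_powr s \<eta> * bracket_powr s (\<xi> - \<eta>))"

definition kdv_phase_window :: "real \<Rightarrow> real \<Rightarrow> real \<Rightarrow> real \<Rightarrow> bool" where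
  "kdv_phase_window \<alpha> M \<xi> \<eta> \<longleftrightarrow> \<bar>3 * \<xi> * \<eta> * (\<xi> - \<eta>) - \<alpha>\<bar> < M"

definition away_from_midpoint :: "real \<Rightarrow> real \<Rightarrow> bool" where
  "away_from_midpoint \<xi> \<eta> \<longleftrightarrow> \<bar>\<xi>\<bar> / 2 \<le> \<bar>\<xi> - 2 * \<eta>\<bar>"

lemma bracket_powr_measurable [measurable (raw)]:
  assumes [measurable]: "f \<in> borel_measurable N"
  shows "(\<lambda>x. bracket_powr s (f x)) \<in> borel_measurable N"
  unfolding bracket_powr_def by measurable

lemma kdv_kernel_measurable [measurable (raw)]:
  assumes [measurable]: "f \<in> borel_measurable N" "g \<in> borel_measurable N"
  shows "(\<lambda>x. kdv_kernel s (f x) (g x)) \<in> borel_measurable N"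
  unfolding kdv_kernel_def by measurable

lemma kdv_phase_window_measurable [measurable (raw)]:
  assumes [measurable]: "f \<in> borel_measurable N" "g \<in> borel_measurable N"
  shows "Measurable.pred N (\<lambda>x. kdv_phase_window \<alpha> M (f x) (g x))"
  unfolding kdv_phase_window_def by measurable

lemma away_from_midpoint_measurable [measurable (raw)]:
  assumes [measurable]: "f \<in> borel_measurable N" "g \<in> borel_measurable N"
  shows "Measurable.pred N (\<lambda>x. away_from_midpoint (f x) (g x))"
  unfolding away_from_midpoint_def by measurable

lemma bracket_powr_pos: "bracket_powr s \<xi> > 0"
proof -
  have "1 + \<xi>\<^sup>2 \<noteq> 0" by (smt (verit) zero_le_power2)
  then show ?thesis unfolding bracket_powr_def by simp
qed

lemma bracket_powr_ge_1: "s \<ge> 0 \<Longrightarrow> bracket_powr s \<xi> \<ge> 1"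
  unfolding bracket_powr_def by (simp add: ge_one_powr_ge_zero)

lemma kdv_kernel_nonneg: "kdv_kernel s \<xi> \<eta> \<ge> 0"
  unfolding kdv_kernel_def
  by (intro divide_nonneg_pos mult_nonneg_nonneg mult_pos_pos) (simp_all add: bracket_powr_pos less_imp_le)

lemma peetre_bracket: "1 + (\<xi>::real)\<^sup>2 \<le> 2 * ((1 + \<eta>\<^sup>2) * (1 + (\<xi> - \<eta>)\<^sup>2))"
proof -
  have "\<xi>\<^sup>2 \<le> 2 * \<eta>\<^sup>2 + 2 * (\<xi> - \<eta>)\<^sup>2"
    using sum_squares_ge_zero[of "2 * \<eta> - \<xi>" 0] by (simp add: power2_eq_square algebra_simps)
  moreover have "0 \<le> \<eta>\<^sup>2 * (\<xi> - \<eta>)\<^sup>2" by simp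
  moreover have "(1 + \<eta>\<^sup>2) * (1 + (\<xi> - \<eta>)\<^sup>2) = 1 + \<eta>\<^sup>2 + (\<xi> - \<eta>)\<^sup>2 + \<eta>\<^sup>2 * (\<xi> - \<eta>)\<^sup>2"
    by (simp add: algebra_simps)
  ultimately show ?thesis by linarith
qed

lemma kdv_kernel_le:
  assumes "s \<ge> 0"
  shows "kdv_kernel s \<xi> \<eta> \<le> 2 powr (s / 2) * \<bar>\<xi>\<bar>"
proof -
  let ?b = "bracket_powr s \<eta> * bracket_powr s (\<xi> - \<eta>)"
  have "bracket_powr s \<xi> \<le> 2 powr (s / 2) * ?b"
    unfolding bracket_powr_def using powr_mono2[OF _ _ peetre_bracket, of "s / 2"] assms
    by (simp add: powr_mult)
  then have "bracket_powr s \<xi> * \<bar>\<xi>\<bar> \<le> 2 powr (s / 2) * ?b * \<bar>\<xi>\<bar>"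
    by (rule mult_right_mono) simp
  then have "bracket_powr s \<xi> * \<bar>\<xi>\<bar> \<le> 2 powr (s / 2) * \<bar>\<xi>\<bar> * ?b"
    by (simp only: ac_simps)
  moreover have "?b > 0" by (simp add: bracket_powr_pos)
  ultimately show ?thesis
    unfolding kdv_kernel_def by (simp add: divide_le_eq)
qed

text \<open>The sign \<sigma> = \<plusminus>1 selects the side of the midpoint \<xi>/2 on which \<eta> lies.\<close>

lemma kdv_window_one_side_cover:
  fixes \<xi> \<sigma> :: real
  assumes "\<xi> \<noteq> 0" "\<bar>\<sigma>\<bar> = 1"
  obtains I where "I \<in> sets lborel"
    "{\<eta>. kdv_phase_window \<alpha> M \<xi> \<eta> \<and> \<xi>\<^sup>2 / 2 \<le> \<sigma> * (\<xi> * (2 * \<eta> - \<xi>))} \<subseteq> I"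
    "emeasure lborel I \<le> ennreal (8 * max M 0 / (3 * \<xi>\<^sup>2))"
proof -
  let ?S = "{\<eta>. kdv_phase_window \<alpha> M \<xi> \<eta> \<and> \<xi>\<^sup>2 / 2 \<le> \<sigma> * (\<xi> * (2 * \<eta> - \<xi>))}"
  have expanding: "3 * \<xi>\<^sup>2 / 2 * \<bar>x - y\<bar> \<le> \<bar>3 * \<xi> * x * (\<xi> - x) - 3 * \<xi> * y * (\<xi> - y)\<bar>"
    if "x \<in> ?S" "y \<in> ?S" for x y
  proof -
    have "\<xi>\<^sup>2 / 2 \<le> \<sigma> * (\<xi> * (x + y - \<xi>))"
      using that by (simp add: algebra_simps)
    also have "\<dots> \<le> \<bar>\<xi> * (x + y - \<xi>)\<bar>"
      using \<open>\<bar>\<sigma>\<bar> = 1\<close> by (metis abs_ge_self abs_mult mult_1)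
    finally have "3 * \<bar>x - y\<bar> * (\<xi>\<^sup>2 / 2) \<le> 3 * \<bar>x - y\<bar> * \<bar>\<xi> * (x + y - \<xi>)\<bar>"
      by (rule mult_left_mono) simp
    then have "3 * \<xi>\<^sup>2 / 2 * \<bar>x - y\<bar> \<le> 3 * \<bar>x - y\<bar> * \<bar>\<xi> * (x + y - \<xi>)\<bar>"
      by (simp add: ac_simps)
    also have "\<dots> = \<bar>3 * \<xi> * x * (\<xi> - x) - 3 * \<xi> * y * (\<xi> - y)\<bar>"
    proof -
      have "3 * \<xi> * x * (\<xi> - x) - 3 * \<xi> * y * (\<xi> - y) = - (3 * (x - y) * (\<xi> * (x + y - \<xi>)))"
        by (simp add: algebra_simps power2_eq_square)
      then show ?thesis by (simp only: abs_minus_cancel abs_mult abs_numeral)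
    qed
    finally show ?thesis .
  qed
  have window: "\<bar>3 * \<xi> * x * (\<xi> - x) - \<alpha>\<bar> < M" if "x \<in> ?S" for x
    using that by (simp add: kdv_phase_window_def)
  have "3 * \<xi>\<^sup>2 / 2 > 0" using assms by simp
  then obtain I where "I \<in> sets lborel" "?S \<subseteq> I"
    "emeasure lborel I \<le> ennreal (4 * max M 0 / (3 * \<xi>\<^sup>2 / 2))"
    using expanding window by (rule expanding_sublevel_set_cover)
  then show ?thesis by (intro that) auto
qed

lemma away_from_midpoint_imp:
  fixes \<xi> \<eta> :: real
  assumes "away_from_midpoint \<xi> \<eta>"
  shows "\<xi>\<^sup>2 / 2 \<le> \<xi> * (2 * \<eta> - \<xi>) \<or> \<xi>\<^sup>2 / 2 \<le> - (\<xi> * (2 * \<eta> - \<xi>))"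
proof -
  have "\<bar>\<xi>\<bar> * (\<bar>\<xi>\<bar> / 2) \<le> \<bar>\<xi>\<bar> * \<bar>\<xi> - 2 * \<eta>\<bar>"
    using assms unfolding away_from_midpoint_def by (intro mult_left_mono) simp_all
  then have "\<xi>\<^sup>2 / 2 \<le> \<bar>\<xi> * (2 * \<eta> - \<xi>)\<bar>"
    by (simp add: abs_mult power2_eq_square abs_minus_commute)
  then show ?thesis by arith
qed

lemma kdv_window_row_cover:
  fixes \<xi> :: real
  assumes "\<xi> \<noteq> 0"
  obtains I where "I \<in> sets lborel"
    "{\<eta>. kdv_phase_window \<alpha> M \<xi> \<eta> \<and> away_from_midpoint \<xi> \<eta>} \<subseteq> I"
    "emeasure lborel I \<le> ennreal (16 * max M 0 / (3 * \<xi>\<^sup>2))"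
proof -
  obtain I1 where I1: "I1 \<in> sets lborel"
    "{\<eta>. kdv_phase_window \<alpha> M \<xi> \<eta> \<and> \<xi>\<^sup>2 / 2 \<le> 1 * (\<xi> * (2 * \<eta> - \<xi>))} \<subseteq> I1"
    "emeasure lborel I1 \<le> ennreal (8 * max M 0 / (3 * \<xi>\<^sup>2))"
    by (rule kdv_window_one_side_cover[where \<sigma> = 1, OF assms]) simp_all
  obtain I2 where I2: "I2 \<in> sets lborel"
    "{\<eta>. kdv_phase_window \<alpha> M \<xi> \<eta> \<and> \<xi>\<^sup>2 / 2 \<le> -1 * (\<xi> * (2 * \<eta> - \<xi>))} \<subseteq> I2"
    "emeasure lborel I2 \<le> ennreal (8 * max M 0 / (3 * \<xi>\<^sup>2))"
    by (rule kdv_window_one_side_cover[where \<sigma> = "-1", OF assms]) simp_all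
  have "{\<eta>. kdv_phase_window \<alpha> M \<xi> \<eta> \<and> away_from_midpoint \<xi> \<eta>} \<subseteq> I1 \<union> I2"
    using I1(2) I2(2) away_from_midpoint_imp by fastforce
  moreover have "emeasure lborel (I1 \<union> I2) \<le> emeasure lborel I1 + emeasure lborel I2"
    using I1(1) I2(1) by (rule emeasure_subadditive)
  moreover have "emeasure lborel I1 + emeasure lborel I2 \<le> ennreal (16 * max M 0 / (3 * \<xi>\<^sup>2))"
    using add_mono[OF I1(3) I2(3)] by (simp flip: ennreal_plus)
  ultimately show ?thesis
    using I1(1) I2(1) by (intro that[of "I1 \<union> I2"]) auto
qed

lemma not_away_from_midpoint_imp:
  fixes \<xi> \<eta> :: real
  assumes "\<not> away_from_midpoint \<xi> \<eta>"
  shows "\<eta>\<^sup>2 \<le> \<eta> * \<xi>" and "\<bar>\<xi>\<bar> \<le> 4 * \<bar>\<eta>\<bar>"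
proof -
  have "\<bar>\<xi> - 2 * \<eta>\<bar> < \<bar>\<xi>\<bar> / 2" using assms unfolding away_from_midpoint_def by simp
  then have "(\<xi> - 2 * \<eta>)\<^sup>2 < (\<bar>\<xi>\<bar> / 2)\<^sup>2"
    by (metis abs_ge_zero abs_power2 power_strict_mono power2_abs zero_less_numeral)
  moreover have "(\<xi> - 2 * \<eta>)\<^sup>2 = \<xi>\<^sup>2 - 4 * (\<eta> * \<xi>) + 4 * \<eta>\<^sup>2"
    by (simp add: power2_eq_square algebra_simps)
  moreover have "(\<bar>\<xi>\<bar> / 2)\<^sup>2 = \<xi>\<^sup>2 / 4"
    by (simp add: power_divide)
  ultimately show "\<eta>\<^sup>2 \<le> \<eta> * \<xi>"
    using zero_le_power2[of \<xi>] by linarith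
  show "\<bar>\<xi>\<bar> \<le> 4 * \<bar>\<eta>\<bar>" using \<open>\<bar>\<xi> - 2 * \<eta>\<bar> < \<bar>\<xi>\<bar> / 2\<close> by linarith
qed

lemma kdv_window_column_cover:
  fixes \<eta> :: real
  assumes "\<eta> \<noteq> 0"
  obtains I where "I \<in> sets lborel"
    "{\<xi>. kdv_phase_window \<alpha> M \<xi> \<eta> \<and> \<not> away_from_midpoint \<xi> \<eta>} \<subseteq> I"
    "emeasure lborel I \<le> ennreal (4 * max M 0 / (3 * \<eta>\<^sup>2))"
proof -
  let ?S = "{\<xi>. kdv_phase_window \<alpha> M \<xi> \<eta> \<and> \<not> away_from_midpoint \<xi> \<eta>}"
  have expanding: "3 * \<eta>\<^sup>2 * \<bar>x - y\<bar> \<le> \<bar>3 * x * \<eta> * (x - \<eta>) - 3 * y * \<eta> * (y - \<eta>)\<bar>"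
    if "x \<in> ?S" "y \<in> ?S" for x y
  proof -
    have "\<eta>\<^sup>2 \<le> \<eta> * (x + y - \<eta>)"
      using that not_away_from_midpoint_imp(1)[of x \<eta>] not_away_from_midpoint_imp(1)[of y \<eta>]
      by (simp add: algebra_simps power2_eq_square)
    then have "3 * \<bar>x - y\<bar> * \<eta>\<^sup>2 \<le> 3 * \<bar>x - y\<bar> * \<bar>\<eta> * (x + y - \<eta>)\<bar>"
      by (intro mult_left_mono) auto
    then have "3 * \<eta>\<^sup>2 * \<bar>x - y\<bar> \<le> 3 * \<bar>x - y\<bar> * \<bar>\<eta> * (x + y - \<eta>)\<bar>"
      by (simp add: ac_simps)
    also have "\<dots> = \<bar>3 * x * \<eta> * (x - \<eta>) - 3 * y * \<eta> * (y - \<eta>)\<bar>"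
    proof -
      have "3 * x * \<eta> * (x - \<eta>) - 3 * y * \<eta> * (y - \<eta>) = 3 * (x - y) * (\<eta> * (x + y - \<eta>))"
        by (simp add: algebra_simps power2_eq_square)
      then show ?thesis by (simp only: abs_mult abs_numeral)
    qed
    finally show ?thesis .
  qed
  have window: "\<bar>3 * x * \<eta> * (x - \<eta>) - \<alpha>\<bar> < M" if "x \<in> ?S" for x
    using that by (simp add: kdv_phase_window_def)
  have "3 * \<eta>\<^sup>2 > 0" using assms by simp
  then obtain I where "I \<in> sets lborel" "?S \<subseteq> I"
    "emeasure lborel I \<le> ennreal (4 * max M 0 / (3 * \<eta>\<^sup>2))"
    using expanding window by (rule expanding_sublevel_set_cover)
  then show ?thesis by (rule that)
qed

lemma kdv_kernel_sq_le:
  assumes "s \<ge> 0"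
  shows "(kdv_kernel s \<xi> \<eta>)\<^sup>2 \<le> 2 powr s * \<xi>\<^sup>2"
proof -
  have "(kdv_kernel s \<xi> \<eta>)\<^sup>2 \<le> (2 powr (s / 2) * \<bar>\<xi>\<bar>)\<^sup>2"
    using kdv_kernel_le[OF assms] kdv_kernel_nonneg by (rule power_mono)
  also have "\<dots> = 2 powr s * \<xi>\<^sup>2"
    by (simp add: power_mult_distrib powr_powr flip: powr_realpow)
  finally show ?thesis .
qed

lemma kdv_kernel_row_integral:
  assumes "s \<ge> 0"
  shows "(\<integral>\<^sup>+\<eta>. (ennreal (kdv_kernel s \<xi> \<eta>) *
            of_bool (kdv_phase_window \<alpha> M \<xi> \<eta> \<and> away_from_midpoint \<xi> \<eta>))\<^sup>2 \<partial>lborel)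
         \<le> ennreal (2 powr s * 16 / 3 * max M 0)"
proof (cases "\<xi> = 0")
  case True
  then show ?thesis by (simp add: kdv_kernel_def)
next
  case False
  then obtain I where I: "I \<in> sets lborel"
    "{\<eta>. kdv_phase_window \<alpha> M \<xi> \<eta> \<and> away_from_midpoint \<xi> \<eta>} \<subseteq> I"
    "emeasure lborel I \<le> ennreal (16 * max M 0 / (3 * \<xi>\<^sup>2))"
    by (rule kdv_window_row_cover)
  have "(\<integral>\<^sup>+\<eta>. (ennreal (kdv_kernel s \<xi> \<eta>) *
            of_bool (kdv_phase_window \<alpha> M \<xi> \<eta> \<and> away_from_midpoint \<xi> \<eta>))\<^sup>2 \<partial>lborel)
      \<le> ennreal (2 powr s * \<xi>\<^sup>2) * emeasure lborel I"
  proof (rule nn_integral_le_cover[OF I(1)])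
    fix \<eta>
    show "(ennreal (kdv_kernel s \<xi> \<eta>) *
            of_bool (kdv_phase_window \<alpha> M \<xi> \<eta> \<and> away_from_midpoint \<xi> \<eta>))\<^sup>2
          \<le> ennreal (2 powr s * \<xi>\<^sup>2)"
      by (rule order_trans[OF ennreal_mult_of_bool_sq_le ennreal_leI[OF kdv_kernel_sq_le[OF assms]]])
  qed (use I(2) in auto)
  also have "\<dots> \<le> ennreal (2 powr s * \<xi>\<^sup>2) * ennreal (16 * max M 0 / (3 * \<xi>\<^sup>2))"
    using I(3) by (rule mult_left_mono) simp
  also have "\<dots> = ennreal (2 powr s * 16 / 3 * max M 0)"
    using False by (simp add: ennreal_mult'[symmetric] field_simps)
  finally show ?thesis .
qed

lemma kdv_kernel_column_integral:
  assumes "s \<ge> 0"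
  shows "(\<integral>\<^sup>+\<xi>. (ennreal (kdv_kernel s \<xi> \<eta>) *
            of_bool (kdv_phase_window \<alpha> M \<xi> \<eta> \<and> \<not> away_from_midpoint \<xi> \<eta>))\<^sup>2 \<partial>lborel)
         \<le> ennreal (2 powr s * 64 / 3 * max M 0)"
proof (cases "\<eta> = 0")
  case True
  then show ?thesis by (simp add: away_from_midpoint_def)
next
  case False
  then obtain I where I: "I \<in> sets lborel"
    "{\<xi>. kdv_phase_window \<alpha> M \<xi> \<eta> \<and> \<not> away_from_midpoint \<xi> \<eta>} \<subseteq> I"
    "emeasure lborel I \<le> ennreal (4 * max M 0 / (3 * \<eta>\<^sup>2))"
    by (rule kdv_window_column_cover)
  have "(\<integral>\<^sup>+\<xi>. (ennreal (kdv_kernel s \<xi> \<eta>) *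
            of_bool (kdv_phase_window \<alpha> M \<xi> \<eta> \<and> \<not> away_from_midpoint \<xi> \<eta>))\<^sup>2 \<partial>lborel)
      \<le> ennreal (2 powr s * (16 * \<eta>\<^sup>2)) * emeasure lborel I"
  proof (rule nn_integral_le_cover[OF I(1)])
    fix \<xi>
    show "(ennreal (kdv_kernel s \<xi> \<eta>) *
            of_bool (kdv_phase_window \<alpha> M \<xi> \<eta> \<and> \<not> away_from_midpoint \<xi> \<eta>))\<^sup>2
          \<le> ennreal (2 powr s * (16 * \<eta>\<^sup>2))"
    proof (cases "away_from_midpoint \<xi> \<eta>")
      case False
      then have "\<xi>\<^sup>2 \<le> (4 * \<bar>\<eta>\<bar>)\<^sup>2"
        using not_away_from_midpoint_imp(2) by (metis abs_ge_zero power2_abs power_mono)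
      then have "(kdv_kernel s \<xi> \<eta>)\<^sup>2 \<le> 2 powr s * (16 * \<eta>\<^sup>2)"
        using kdv_kernel_sq_le[OF assms, of \<xi> \<eta>] by (simp add: power_mult_distrib order_trans)
      then show ?thesis
        by (rule order_trans[OF ennreal_mult_of_bool_sq_le ennreal_leI])
    qed simp
  qed (use I(2) in auto)
  also have "\<dots> \<le> ennreal (2 powr s * (16 * \<eta>\<^sup>2)) * ennreal (4 * max M 0 / (3 * \<eta>\<^sup>2))"
    using I(3) by (rule mult_left_mono) simp
  also have "\<dots> = ennreal (2 powr s * 64 / 3 * max M 0)"
    using False by (simp add: ennreal_mult'[symmetric] field_simps)
  finally show ?thesis .
qed

definition weighted_modulus :: "real \<Rightarrow> (real \<Rightarrow> complex) \<Rightarrow> real \<Rightarrow> ennreal" where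
  "weighted_modulus s f \<xi> = ennreal (bracket_powr s \<xi> * cmod (f \<xi>))"

lemma weighted_modulus_measurable [measurable]:
  "f \<in> borel_measurable borel \<Longrightarrow> weighted_modulus s f \<in> borel_measurable borel"
  unfolding weighted_modulus_def by measurable

lemma Hs_sq_eq_weighted_modulus: "Hs_sq s f = (\<integral>\<^sup>+\<xi>. (weighted_modulus s f \<xi>)\<^sup>2 \<partial>lborel)"
proof -
  have "(bracket_powr s \<xi>)\<^sup>2 = (1 + \<xi>\<^sup>2) powr s" for \<xi>
    unfolding bracket_powr_def by (simp add: power2_eq_square flip: powr_add)
  then show ?thesis
    unfolding Hs_sq_def weighted_modulus_def
    by (simp add: ennreal_power bracket_powr_pos less_imp_le power_mult_distrib)
qed

lemma T_KdV_pointwise_le: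
  assumes [measurable]: "f1 \<in> borel_measurable borel" "f2 \<in> borel_measurable borel"
  shows "weighted_modulus s (T_KdV \<alpha> M f1 f2) \<xi>
    \<le> (\<integral>\<^sup>+\<eta>. ennreal (kdv_kernel s \<xi> \<eta>) * of_bool (kdv_phase_window \<alpha> M \<xi> \<eta>) *
           weighted_modulus s f1 \<eta> * weighted_modulus s f2 (\<xi> - \<eta>) \<partial>lborel)"
proof -
  let ?g = "\<lambda>\<eta>. ennreal (\<bar>\<xi>\<bar> * cmod (f1 \<eta>) * cmod (f2 (\<xi> - \<eta>)))"
  have "ennreal (cmod (T_KdV \<alpha> M f1 f2 \<xi>))
      \<le> (\<integral>\<^sup>+\<eta>. ennreal (norm (indicator {\<eta>. \<bar>3 * \<xi> * \<eta> * (\<xi> - \<eta>) - \<alpha>\<bar> < M} \<eta> *\<^sub>R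
                   (complex_of_real \<xi> * f1 \<eta> * f2 (\<xi> - \<eta>)))) \<partial>lborel)"
    unfolding T_KdV_def by (rule norm_integral_le_nn_integral)
  also have "\<dots> = (\<integral>\<^sup>+\<eta>. of_bool (kdv_phase_window \<alpha> M \<xi> \<eta>) * ?g \<eta> \<partial>lborel)"
    by (intro nn_integral_cong) (simp add: kdv_phase_window_def indicator_def norm_mult)
  finally have "weighted_modulus s (T_KdV \<alpha> M f1 f2) \<xi>
      \<le> ennreal (bracket_powr s \<xi>) * (\<integral>\<^sup>+\<eta>. of_bool (kdv_phase_window \<alpha> M \<xi> \<eta>) * ?g \<eta> \<partial>lborel)"
    unfolding weighted_modulus_def
    by (simp add: ennreal_mult bracket_powr_pos less_imp_le mult_left_mono)
  also have "\<dots> = (\<integral>\<^sup>+\<eta>. ennreal (bracket_powr s \<xi>) * (of_bool (kdv_phase_window \<alpha> M \<xi> \<eta>) * ?g \<eta>) \<partial>lborel)"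
    by (rule nn_integral_cmult[symmetric]) measurable
  also have "\<dots> = (\<integral>\<^sup>+\<eta>. ennreal (kdv_kernel s \<xi> \<eta>) * of_bool (kdv_phase_window \<alpha> M \<xi> \<eta>) *
           weighted_modulus s f1 \<eta> * weighted_modulus s f2 (\<xi> - \<eta>) \<partial>lborel)"
  proof (intro nn_integral_cong)
    fix \<eta>
    have "bracket_powr s \<xi> * (\<bar>\<xi>\<bar> * cmod (f1 \<eta>) * cmod (f2 (\<xi> - \<eta>)))
        = kdv_kernel s \<xi> \<eta> * (bracket_powr s \<eta> * cmod (f1 \<eta>)) * (bracket_powr s (\<xi> - \<eta>) * cmod (f2 (\<xi> - \<eta>)))"
      unfolding kdv_kernel_def using bracket_powr_pos[of s \<eta>] bracket_powr_pos[of s "\<xi> - \<eta>"]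
      by (simp add: field_simps)
    then show "ennreal (bracket_powr s \<xi>) * (of_bool (kdv_phase_window \<alpha> M \<xi> \<eta>) * ?g \<eta>)
        = ennreal (kdv_kernel s \<xi> \<eta>) * of_bool (kdv_phase_window \<alpha> M \<xi> \<eta>) *
           weighted_modulus s f1 \<eta> * weighted_modulus s f2 (\<xi> - \<eta>)"
      unfolding weighted_modulus_def
      by (cases "kdv_phase_window \<alpha> M \<xi> \<eta>")
        (simp_all add: kdv_kernel_nonneg bracket_powr_pos less_imp_le ac_simps flip: ennreal_mult)
  qed
  finally show ?thesis .
qed

lemma T_KdV_pointwise_le_split:
  assumes [measurable]: "f1 \<in> borel_measurable borel" "f2 \<in> borel_measurable borel"
  shows "weighted_modulus s (T_KdV \<alpha> M f1 f2) \<xi>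
    \<le> (\<integral>\<^sup>+\<eta>. ennreal (kdv_kernel s \<xi> \<eta>) * of_bool (kdv_phase_window \<alpha> M \<xi> \<eta> \<and> away_from_midpoint \<xi> \<eta>) *
           weighted_modulus s f1 \<eta> * weighted_modulus s f2 (\<xi> - \<eta>) \<partial>lborel)
      + (\<integral>\<^sup>+\<eta>. ennreal (kdv_kernel s \<xi> \<eta>) * of_bool (kdv_phase_window \<alpha> M \<xi> \<eta> \<and> \<not> away_from_midpoint \<xi> \<eta>) *
           weighted_modulus s f1 \<eta> * weighted_modulus s f2 (\<xi> - \<eta>) \<partial>lborel)"
proof -
  have "of_bool (kdv_phase_window \<alpha> M \<xi> \<eta>) =
      (of_bool (kdv_phase_window \<alpha> M \<xi> \<eta> \<and> away_from_midpoint \<xi> \<eta>) +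
       of_bool (kdv_phase_window \<alpha> M \<xi> \<eta> \<and> \<not> away_from_midpoint \<xi> \<eta>) :: ennreal)" for \<eta>
    by (cases "away_from_midpoint \<xi> \<eta>") simp_all
  with T_KdV_pointwise_le[of f1 f2 s \<alpha> M \<xi>] show ?thesis
    by (simp add: distrib_left distrib_right nn_integral_add)
qed

lemma Hs_sq_T_KdV_le:
  assumes [measurable]: "f1 \<in> borel_measurable borel" "f2 \<in> borel_measurable borel"
    and "s \<ge> 0"
  shows "Hs_sq s (T_KdV \<alpha> M f1 f2)
           \<le> ennreal (2 powr s * 160 / 3 * max M 0) * Hs_sq s f1 * Hs_sq s f2"
proof -
  define k1 where "k1 \<xi> \<eta> = ennreal (kdv_kernel s \<xi> \<eta>) *
    of_bool (kdv_phase_window \<alpha> M \<xi> \<eta> \<and> away_from_midpoint \<xi> \<eta>)" for \<xi> \<eta>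
  define k2 where "k2 \<xi> \<eta> = ennreal (kdv_kernel s \<xi> \<eta>) *
    of_bool (kdv_phase_window \<alpha> M \<xi> \<eta> \<and> \<not> away_from_midpoint \<xi> \<eta>)" for \<xi> \<eta>
  have [measurable]: "case_prod k1 \<in> borel_measurable (lborel \<Otimes>\<^sub>M lborel)"
    "case_prod k2 \<in> borel_measurable (lborel \<Otimes>\<^sub>M lborel)"
    unfolding k1_def k2_def by measurable
  let ?Q = "\<lambda>k \<xi>. \<integral>\<^sup>+\<eta>. k \<xi> \<eta> * weighted_modulus s f1 \<eta> * weighted_modulus s f2 (\<xi> - \<eta>) \<partial>lborel"
  let ?H = "Hs_sq s f1 * Hs_sq s f2"
  let ?cr = "2 powr s * 16 / 3 * max M 0" and ?cc = "2 powr s * 64 / 3 * max M 0"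
  have "weighted_modulus s (T_KdV \<alpha> M f1 f2) \<xi> \<le> ?Q k1 \<xi> + ?Q k2 \<xi>" for \<xi>
    using T_KdV_pointwise_le_split[of f1 f2 s \<alpha> M \<xi>] by (simp add: k1_def k2_def)
  then have "Hs_sq s (T_KdV \<alpha> M f1 f2) \<le> (\<integral>\<^sup>+\<xi>. (?Q k1 \<xi> + ?Q k2 \<xi>)\<^sup>2 \<partial>lborel)"
    unfolding Hs_sq_eq_weighted_modulus by (intro nn_integral_mono power_mono) simp_all
  also have "\<dots> \<le> 2 * (\<integral>\<^sup>+\<xi>. (?Q k1 \<xi>)\<^sup>2 \<partial>lborel) + 2 * (\<integral>\<^sup>+\<xi>. (?Q k2 \<xi>)\<^sup>2 \<partial>lborel)"
    by (rule nn_integral_sq_add_le; measurable)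
  also have "\<dots> \<le> 2 * (ennreal ?cr * ?H) + 2 * (ennreal ?cc * ?H)"
  proof (intro add_mono mult_left_mono order.refl)
    show "(\<integral>\<^sup>+\<xi>. (?Q k1 \<xi>)\<^sup>2 \<partial>lborel) \<le> ennreal ?cr * ?H"
      using nn_integral_bilinear_sq_le_row[of k1] kdv_kernel_row_integral[OF \<open>s \<ge> 0\<close>]
      by (simp add: k1_def Hs_sq_eq_weighted_modulus mult.assoc)
    show "(\<integral>\<^sup>+\<xi>. (?Q k2 \<xi>)\<^sup>2 \<partial>lborel) \<le> ennreal ?cc * ?H"
      using nn_integral_bilinear_sq_le_column[of k2] kdv_kernel_column_integral[OF \<open>s \<ge> 0\<close>]
      by (simp add: k2_def Hs_sq_eq_weighted_modulus mult.assoc)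
  qed simp_all
  also have "\<dots> = ennreal (2 * ?cr + 2 * ?cc) * ?H"
    using ennreal_plus[of "2 * ?cr" "2 * ?cc"] ennreal_mult'[of 2 ?cr] ennreal_mult'[of 2 ?cc]
    by (simp add: distrib_right mult.assoc)
  also have "2 * ?cr + 2 * ?cc = 2 powr s * 160 / 3 * max M 0"
    by simp
  finally show ?thesis by (simp add: mult.assoc)
qed

definition Hs_norm :: "real \<Rightarrow> (real \<Rightarrow> complex) \<Rightarrow> real" where
  "Hs_norm s f = sqrt (enn2real (Hs_sq s f))"

definition Llam_norm :: "real \<Rightarrow> (real \<Rightarrow> complex) \<Rightarrow> real" where
  "Llam_norm lam f = enn2real (Llam_pow lam f) powr (1 / lam)"

lemma calH_norm_eq: "calH_norm s lam f = Hs_norm s f + Llam_norm lam f"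
  unfolding calH_norm_def Hs_norm_def Llam_norm_def ..

lemma Hs_norm_nonneg: "Hs_norm s f \<ge> 0"
  unfolding Hs_norm_def by simp

lemma Llam_norm_nonneg: "Llam_norm lam f \<ge> 0"
  unfolding Llam_norm_def by simp

lemma Hs_sq_eq_Hs_norm: "Hs_sq s f < \<infinity> \<Longrightarrow> Hs_sq s f = ennreal ((Hs_norm s f)\<^sup>2)"
  unfolding Hs_norm_def by (simp add: less_top)

lemma T_KdV_measurable:
  assumes [measurable]: "f1 \<in> borel_measurable borel" "f2 \<in> borel_measurable borel"
  shows "T_KdV \<alpha> M f1 f2 \<in> borel_measurable lborel"
  unfolding T_KdV_def by measurable

lemma T_KdV_low_frequency_le:
  assumes [measurable]: "f1 \<in> borel_measurable borel" "f2 \<in> borel_measurable borel"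
    and "s \<ge> 0" and "\<bar>\<xi>\<bar> \<le> 1"
  shows "(ennreal (cmod (T_KdV \<alpha> M f1 f2 \<xi>)))\<^sup>2 \<le> ennreal (2 powr s) * Hs_sq s f1 * Hs_sq s f2"
proof -
  let ?F1 = "weighted_modulus s f1" and ?F2 = "weighted_modulus s f2"
  have "ennreal (cmod (T_KdV \<alpha> M f1 f2 \<xi>)) \<le> weighted_modulus s (T_KdV \<alpha> M f1 f2) \<xi>"
    unfolding weighted_modulus_def
    using bracket_powr_ge_1[OF \<open>s \<ge> 0\<close>, of \<xi>] by (intro ennreal_leI) (simp add: mult_le_cancel_right1)
  also have "\<dots> \<le> (\<integral>\<^sup>+\<eta>. ennreal (kdv_kernel s \<xi> \<eta>) * of_bool (kdv_phase_window \<alpha> M \<xi> \<eta>) *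
           ?F1 \<eta> * ?F2 (\<xi> - \<eta>) \<partial>lborel)"
    by (rule T_KdV_pointwise_le) measurable
  also have "\<dots> \<le> (\<integral>\<^sup>+\<eta>. ennreal (2 powr (s / 2)) * (?F1 \<eta> * ?F2 (\<xi> - \<eta>)) \<partial>lborel)"
  proof (intro nn_integral_mono)
    fix \<eta>
    have "kdv_kernel s \<xi> \<eta> \<le> 2 powr (s / 2)"
      using kdv_kernel_le[OF \<open>s \<ge> 0\<close>, of \<xi> \<eta>] \<open>\<bar>\<xi>\<bar> \<le> 1\<close>
      by (meson mult_left_le order_trans abs_ge_zero powr_ge_zero)
    then have "ennreal (kdv_kernel s \<xi> \<eta>) * of_bool (kdv_phase_window \<alpha> M \<xi> \<eta>) \<le> ennreal (2 powr (s / 2))"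
      by (cases "kdv_phase_window \<alpha> M \<xi> \<eta>") (simp_all add: ennreal_leI)
    from mult_right_mono[OF this zero_le[of "?F1 \<eta> * ?F2 (\<xi> - \<eta>)"]] show "ennreal (kdv_kernel s \<xi> \<eta>) * of_bool (kdv_phase_window \<alpha> M \<xi> \<eta>) * ?F1 \<eta> * ?F2 (\<xi> - \<eta>)
        \<le> ennreal (2 powr (s / 2)) * (?F1 \<eta> * ?F2 (\<xi> - \<eta>))"
      by (simp only: mult.assoc)
  qed
  also have "\<dots> = ennreal (2 powr (s / 2)) * (\<integral>\<^sup>+\<eta>. ?F1 \<eta> * ?F2 (\<xi> - \<eta>) \<partial>lborel)"
    by (rule nn_integral_cmult) measurable
  finally have "(ennreal (cmod (T_KdV \<alpha> M f1 f2 \<xi>)))\<^sup>2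
      \<le> (ennreal (2 powr (s / 2)))\<^sup>2 * (\<integral>\<^sup>+\<eta>. ?F1 \<eta> * ?F2 (\<xi> - \<eta>) \<partial>lborel)\<^sup>2"
    by (simp add: power_mono flip: power_mult_distrib)
  also have "\<dots> \<le> ennreal (2 powr s) * (Hs_sq s f1 * Hs_sq s f2)"
    using nn_integral_convolution_sq_le[of ?F1 ?F2 \<xi>]
    by (intro mult_mono) (simp_all add: Hs_sq_eq_weighted_modulus ennreal_power powr_powr flip: powr_realpow)
  finally show ?thesis by (simp add: mult.assoc)
qed

lemma sqrt_max_le_bracket: "sqrt (max M 0) \<le> (1 + M\<^sup>2) powr (1 / 4)"
proof -
  have "max M 0 \<le> sqrt (1 + M\<^sup>2)"
    by (rule real_le_rsqrt) (auto simp: max_def)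
  then have "sqrt (max M 0) \<le> sqrt (sqrt (1 + M\<^sup>2))"
    by simp
  also have "\<dots> = (1 + M\<^sup>2) powr (1 / 4)"
    by (simp add: add_pos_nonneg powr_powr flip: powr_half_sqrt)
  finally show ?thesis .
qed

lemma Hs_norm_T_KdV_le:
  assumes [measurable]: "f1 \<in> borel_measurable borel" "f2 \<in> borel_measurable borel"
    and "s \<ge> 0" and finite: "Hs_sq s f1 < \<infinity>" "Hs_sq s f2 < \<infinity>"
  shows "Hs_sq s (T_KdV \<alpha> M f1 f2) < \<infinity>"
    and "Hs_norm s (T_KdV \<alpha> M f1 f2)
           \<le> sqrt (2 powr s * 160 / 3) * (1 + M\<^sup>2) powr (1 / 4) * Hs_norm s f1 * Hs_norm s f2"
proof -
  define c where "c = sqrt (2 powr s * 160 / 3) * sqrt (max M 0) * Hs_norm s f1 * Hs_norm s f2"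
  have "c \<ge> 0" unfolding c_def by (simp add: Hs_norm_nonneg)
  have "Hs_sq s (T_KdV \<alpha> M f1 f2) \<le> ennreal (2 powr s * 160 / 3 * max M 0) * Hs_sq s f1 * Hs_sq s f2"
    using \<open>s \<ge> 0\<close> by (rule Hs_sq_T_KdV_le[rotated 2]) measurable
  also have "\<dots> = ennreal (c\<^sup>2)"
    unfolding c_def using finite
    by (simp add: Hs_sq_eq_Hs_norm power_mult_distrib flip: ennreal_mult)
  finally have T: "Hs_sq s (T_KdV \<alpha> M f1 f2) \<le> ennreal (c\<^sup>2)" .
  then show "Hs_sq s (T_KdV \<alpha> M f1 f2) < \<infinity>"
    by (simp add: le_less_trans)
  have "Hs_norm s (T_KdV \<alpha> M f1 f2) \<le> c"
    unfolding Hs_norm_def using enn2real_mono[OF T] \<open>c \<ge> 0\<close> by (simp add: real_sqrt_le_iff real_le_lsqrt)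
  also have "c \<le> sqrt (2 powr s * 160 / 3) * (1 + M\<^sup>2) powr (1 / 4) * Hs_norm s f1 * Hs_norm s f2"
    unfolding c_def using sqrt_max_le_bracket[of M]
    by (intro mult_right_mono mult_left_mono) (simp_all add: Hs_norm_nonneg)
  finally show "Hs_norm s (T_KdV \<alpha> M f1 f2)
      \<le> sqrt (2 powr s * 160 / 3) * (1 + M\<^sup>2) powr (1 / 4) * Hs_norm s f1 * Hs_norm s f2" .
qed

lemma Llam_norm_le_of_bounded:
  assumes "lam \<ge> 1" "B \<ge> 0" and bounded: "\<And>\<xi>. \<bar>\<xi>\<bar> \<le> 1 \<Longrightarrow> cmod (f \<xi>) \<le> B"
  shows "Llam_pow lam f < \<infinity>" and "Llam_norm lam f \<le> 2 * B"
proof -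
  have "Llam_pow lam f \<le> (\<integral>\<^sup>+(\<xi>::real). ennreal (B powr lam) * indicator {-1<..<1} \<xi> \<partial>lborel)"
    unfolding Llam_pow_def
  proof (rule nn_integral_mono)
    fix \<xi> :: real
    show "ennreal (cmod (f \<xi>) powr lam) * indicator {-1<..<1} \<xi> \<le> ennreal (B powr lam) * indicator {-1<..<1} \<xi>"
    proof (cases "\<xi> \<in> {-1<..<1}")
      case True
      then have "cmod (f \<xi>) powr lam \<le> B powr lam"
        using bounded[of \<xi>] \<open>lam \<ge> 1\<close> by (intro powr_mono2) auto
      with True show ?thesis by (simp add: ennreal_leI)
    qed simp
  qed
  also have "\<dots> = ennreal (2 * B powr lam)"
    by (simp add: nn_integral_cmult_indicator ennreal_mult' mult.commute)
  finally have L: "Llam_pow lam f \<le> ennreal (2 * B powr lam)" .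
  then show "Llam_pow lam f < \<infinity>"
    by (simp add: le_less_trans)
  have "Llam_norm lam f \<le> (2 * B powr lam) powr (1 / lam)"
    unfolding Llam_norm_def using enn2real_mono[OF L] \<open>lam \<ge> 1\<close> by (intro powr_mono2) simp_all
  also have "\<dots> = 2 powr (1 / lam) * B"
    using \<open>lam \<ge> 1\<close> \<open>B \<ge> 0\<close> by (simp add: powr_mult powr_powr)
  also have "\<dots> \<le> 2 * B"
    using \<open>lam \<ge> 1\<close> \<open>B \<ge> 0\<close> powr_mono[of "1 / lam" 1 2] by (intro mult_right_mono) simp_all
  finally show "Llam_norm lam f \<le> 2 * B" .
qed

lemma Llam_norm_T_KdV_le:
  assumes [measurable]: "f1 \<in> borel_measurable borel" "f2 \<in> borel_measurable borel"
    and "s \<ge> 0" "lam \<ge> 1" and finite: "Hs_sq s f1 < \<infinity>" "Hs_sq s f2 < \<infinity>"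
  shows "Llam_pow lam (T_KdV \<alpha> M f1 f2) < \<infinity>"
    and "Llam_norm lam (T_KdV \<alpha> M f1 f2) \<le> 2 * (2 powr (s / 2) * Hs_norm s f1 * Hs_norm s f2)"
proof -
  let ?B = "2 powr (s / 2) * Hs_norm s f1 * Hs_norm s f2"
  have bounded: "cmod (T_KdV \<alpha> M f1 f2 \<xi>) \<le> ?B" if "\<bar>\<xi>\<bar> \<le> 1" for \<xi>
  proof -
    have "(ennreal (cmod (T_KdV \<alpha> M f1 f2 \<xi>)))\<^sup>2 \<le> ennreal (2 powr s) * Hs_sq s f1 * Hs_sq s f2"
      using \<open>s \<ge> 0\<close> that by (rule T_KdV_low_frequency_le[rotated 2]) measurable
    also have "\<dots> = ennreal (?B\<^sup>2)"
      using finite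
      by (simp add: Hs_sq_eq_Hs_norm power_mult_distrib powr_powr flip: ennreal_mult powr_realpow)
    finally have "(cmod (T_KdV \<alpha> M f1 f2 \<xi>))\<^sup>2 \<le> ?B\<^sup>2"
      by (simp add: ennreal_power flip: ennreal_le_iff)
    then show ?thesis
      by (simp add: power2_le_iff_abs_le Hs_norm_nonneg)
  qed
  have "?B \<ge> 0" by (simp add: Hs_norm_nonneg)
  show "Llam_pow lam (T_KdV \<alpha> M f1 f2) < \<infinity>"
    by (rule Llam_norm_le_of_bounded(1)[OF \<open>lam \<ge> 1\<close> \<open>?B \<ge> 0\<close> bounded])
  show "Llam_norm lam (T_KdV \<alpha> M f1 f2) \<le> 2 * ?B"
    by (rule Llam_norm_le_of_bounded(2)[OF \<open>lam \<ge> 1\<close> \<open>?B \<ge> 0\<close> bounded])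
qed

lemma calH_norm_T_KdV_le:
  assumes "s \<ge> 0" "lam \<ge> 1" and "in_calH s lam f1" "in_calH s lam f2"
  shows "in_calH s lam (T_KdV \<alpha> M f1 f2)"
    and "calH_norm s lam (T_KdV \<alpha> M f1 f2)
           \<le> (sqrt (2 powr s * 160 / 3) + 2 * 2 powr (s / 2)) * (1 + M\<^sup>2) powr (1 / 4)
              * calH_norm s lam f1 * calH_norm s lam f2"
proof -
  have [measurable]: "f1 \<in> borel_measurable borel" "f2 \<in> borel_measurable borel"
    and finite: "Hs_sq s f1 < \<infinity>" "Hs_sq s f2 < \<infinity>"
    using assms(3,4) by (simp_all add: in_calH_def)
  let ?T = "T_KdV \<alpha> M f1 f2" and ?P = "(1 + M\<^sup>2) powr (1 / 4)"
  let ?a = "sqrt (2 powr s * 160 / 3)" and ?b = "2 * 2 powr (s / 2)"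
  let ?n = "Hs_norm s f1 * Hs_norm s f2"
  note Hs = Hs_norm_T_KdV_le[OF _ _ \<open>s \<ge> 0\<close> finite, of \<alpha> M]
  note Llam = Llam_norm_T_KdV_le[OF _ _ \<open>s \<ge> 0\<close> \<open>lam \<ge> 1\<close> finite, of \<alpha> M]
  show "in_calH s lam ?T"
    using Hs(1) Llam(1) T_KdV_measurable[of f1 f2 \<alpha> M] by (simp add: in_calH_def)
  have "?P \<ge> 1" by (simp add: ge_one_powr_ge_zero)
  have "?b * ?n \<ge> 0" by (simp add: Hs_norm_nonneg)
  have "calH_norm s lam ?T \<le> ?a * ?P * ?n + ?b * ?n"
    using Hs(2) Llam(2) by (simp add: calH_norm_eq mult.assoc)
  also have "\<dots> \<le> (?a + ?b) * ?P * ?n"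
    using mult_left_mono[OF \<open>?P \<ge> 1\<close> \<open>?b * ?n \<ge> 0\<close>] by (simp add: algebra_simps)
  also have "\<dots> \<le> (?a + ?b) * ?P * (calH_norm s lam f1 * calH_norm s lam f2)"
    using \<open>?P \<ge> 1\<close>
    by (intro mult_left_mono mult_mono) (simp_all add: calH_norm_eq Hs_norm_nonneg Llam_norm_nonneg)
  finally show "calH_norm s lam ?T \<le> (?a + ?b) * ?P * calH_norm s lam f1 * calH_norm s lam f2"
    by (simp add: mult.assoc)
qed

theorem lemma8:
  fixes s \<epsilon> \<rho> lam \<sigma> :: real
  assumes "s > 0" and "0 < \<epsilon>" and "\<epsilon> < min s 1"
    and "\<rho> > 1" and "lam > 1" and "1/2 < \<sigma>" and "\<sigma> < 1"
    and "1 - \<sigma> = 1 / \<rho> + 1 / lam"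
    and "\<rho> * (2 * \<sigma> - 1 - \<epsilon>) > 1"
    and "s < 1 \<longrightarrow> lam \<le> 2 / (1 - s)"
  shows "\<exists>C. \<forall>\<alpha> M :: real. \<forall>f1 f2 :: real \<Rightarrow> complex.
           in_calH s lam f1 \<and> in_calH s lam f2 \<longrightarrow>
             in_calH s lam (T_KdV \<alpha> M f1 f2) \<and>
             calH_norm s lam (T_KdV \<alpha> M f1 f2)
               \<le> C * (1 + M\<^sup>2) powr (1/4) * calH_norm s lam f1 * calH_norm s lam f2"
proof -
  have "s \<ge> 0" "lam \<ge> 1" using \<open>s > 0\<close> \<open>lam > 1\<close> by simp_all
  then show ?thesis
    using calH_norm_T_KdV_le by blast
qed

end
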